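(* Let $n\le N$, let $\Xi$ be the set of designs $\{(\boldsymbol{x}_i,w_i):i=1,\ldots,N\}$ with $0\le w_i\le1/n$ and $\sum_iw_i=1$, let $\Phi\in\Lambda$, and let $\xi^*\in\Xi$ satisfy $\Phi(\xi^* )=\min_{\xi\in\Xi}\Phi(\xi)$. Let $\epsilon>0$ and let $\xi_\epsilon=\{(\boldsymbol{x}_i,w_i)\}\in\Xi$ with $\Phi(\xi_\epsilon)<\infty$. Suppose there is a partition $\mathcal{X}=\mathcal{X}_1\cup\mathcal{X}_2\cup\mathcal{X}_3$ of $\{\boldsymbol{x}_1,\ldots,\boldsymbol{x}_N\}$ such that (a) $w_i=0$ for $\boldsymbol{x}_i\in\mathcal{X}_1$ and $w_i=1/n$ for $\boldsymbol{x}_i\in\mathcal{X}_3$; (b) if $\mathcal{X}_2=\emptyset$, then $\max_{\boldsymbol{x}_i\in\mathcal{X}_3}F_\Phi(\xi_\epsilon;\boldsymbol{x}_i)\le\min_{\boldsymbol{x}_i\in\mathcal{X}_1}F_\Phi(\xi_\epsilon;\boldsymbol{x}_i)+\epsilon$; (c) if $\mathcal{X}_2\ne\emptyset$, then there is a number $s$ such that for every $\boldsymbol{x}_i\in\mathcal{X}_2$: (i) $0<w_i<1/n$; (ii) $s-\epsilon/2<F_\Phi(\xi_\epsilon;\boldsymbol{x}_i)<s+\epsilon/2$; and (iii) $\max_{\boldsymbol{x}_j\in\mathcal{X}_3}F_\Phi(\xi_\epsilon;\boldsymbol{x}_j)\le s+\epsilon/2$ and $s-\epsilon/2\le\min_{\boldsymbol{x}_j\in\mathcal{X}_1}F_\Phi(\xi_\epsilon;\boldsymbol{x}_j)$.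 Then $\xi_\epsilon$ is an $\epsilon$-approximation of a $\Phi$-optimal design, i.e. $\Phi(\xi_\epsilon)-\Phi(\xi^* )\le\epsilon$. (Maximum over the empty set is $-\infty$, minimum over the empty set is $+\infty$.)
   Context: Designs $\xi=\{(\boldsymbol{x}_i,w_i)\}$ on $\mathcal{X}=\{\boldsymbol{x}_1,\ldots,\boldsymbol{x}_N\}$ with $w_i\ge0$, $\sum w_i=1$; $M(\xi)=\sum_iw_iI_{\boldsymbol\theta}(\boldsymbol{x}_i)$ with symmetric PSD $I_{\boldsymbol\theta}(\boldsymbol{x}_i)$; $\Phi(\xi)$ is a criterion of $M(\xi)$ ($+\infty$ when undefined). $F_\Phi(\xi,\eta)=\lim_{\alpha\downarrow0}[\Phi((1-\alpha)\xi+\alpha\eta)-\Phi(\xi)]/\alpha$; $F_\Phi(\xi;\boldsymbol{x}_i)=F_\Phi(\xi,\delta_{\boldsymbol{x}_i})$ with $\delta_{\boldsymbol{x}_i}$ the one-point design at $\boldsymbol{x}_i$. $\Lambda$: criteria convex in the weights, linearly differentiable ($F_\Phi(\xi,\eta)=\sum_i\lambda_iF_\Phi(\xi;\boldsymbol{x}_i)$ for $\eta=\{(\boldsymbol{x}_i,\lambda_i)\}$ whenever $\Phi(\xi)<\infty$), and infinitely differentiable along line segments of designs. A design $\xi$ is an $\epsilon$-approximation of an optimal design $\xi^*$ if $\Phi(\xi)-\Phi(\xi^* )\le\epsilon$. *)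

theory Defs
  imports "HOL-Analysis.Analysis"
begin

text \<open>Candidate points are indexed by i < N.  A design is its weight vector
  w :: nat => real (weights outside {..<N} are fixed to 0).\<close>

definition design :: "nat \<Rightarrow> (nat \<Rightarrow> real) \<Rightarrow> bool" where
  "design N w \<longleftrightarrow> (\<forall>i<N. 0 \<le> w i) \<and> (\<forall>i\<ge>N. w i = 0) \<and> (\<Sum>i<N. w i) = 1"

definition bounded_design :: "nat \<Rightarrow> nat \<Rightarrow> (nat \<Rightarrow> real) \<Rightarrow> bool" where
  "bounded_design N n w \<longleftrightarrow> design N w \<and> (\<forall>i<N. w i \<le> 1 / real n)"

definition delta :: "nat \<Rightarrow> nat \<Rightarrow> real" where
  "delta i = (\<lambda>j. if j = i then 1 else 0)"

definition mix :: "real \<Rightarrow> (nat \<Rightarrow> real) \<Rightarrow> (nat \<Rightarrow> real) \<Rightarrow> nat \<Rightarrow> real" where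
  "mix a xi eta = (\<lambda>j. (1 - a) * xi j + a * eta j)"

definition info_matrix :: "nat \<Rightarrow> (nat \<Rightarrow> real^'p^'p) \<Rightarrow> (nat \<Rightarrow> real) \<Rightarrow> real^'p^'p" where
  "info_matrix N I w = (\<Sum>i<N. w i *\<^sub>R I i)"

definition psd_sym :: "real^'p^'p \<Rightarrow> bool" where
  "psd_sym A \<longleftrightarrow> transpose A = A \<and> (\<forall>x. 0 \<le> x \<bullet> (A *v x))"

definition diff_quot :: "((nat \<Rightarrow> real) \<Rightarrow> ereal) \<Rightarrow> (nat \<Rightarrow> real) \<Rightarrow> (nat \<Rightarrow> real) \<Rightarrow> real \<Rightarrow> ereal" where
  "diff_quot Phi xi eta a = (Phi (mix a xi eta) - Phi xi) / ereal a"

definition dirderiv :: "((nat \<Rightarrow> real) \<Rightarrow> ereal) \<Rightarrow> (nat \<Rightarrow> real) \<Rightarrow> (nat \<Rightarrow> real) \<Rightarrow> ereal" where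
  "dirderiv Phi xi eta = Lim (at_right 0) (diff_quot Phi xi eta)"

definition dirderiv_pt :: "((nat \<Rightarrow> real) \<Rightarrow> ereal) \<Rightarrow> (nat \<Rightarrow> real) \<Rightarrow> nat \<Rightarrow> ereal" where
  "dirderiv_pt Phi xi i = dirderiv Phi xi (delta i)"

definition convex_crit :: "nat \<Rightarrow> ((nat \<Rightarrow> real) \<Rightarrow> ereal) \<Rightarrow> bool" where
  "convex_crit N Phi \<longleftrightarrow>
     (\<forall>xi eta a. design N xi \<longrightarrow> design N eta \<longrightarrow> 0 \<le> a \<longrightarrow> a \<le> 1 \<longrightarrow>
        Phi (mix a xi eta) \<le> ereal (1 - a) * Phi xi + ereal a * Phi eta)"

definition lin_differentiable :: "nat \<Rightarrow> ((nat \<Rightarrow> real) \<Rightarrow> ereal) \<Rightarrow> bool" where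
  "lin_differentiable N Phi \<longleftrightarrow>
     (\<forall>xi. design N xi \<longrightarrow> Phi xi < \<infinity> \<longrightarrow>
        (\<forall>i<N. (diff_quot Phi xi (delta i) \<longlongrightarrow> dirderiv_pt Phi xi i) (at_right 0)
               \<and> \<bar>dirderiv_pt Phi xi i\<bar> \<noteq> \<infinity>) \<and>
        (\<forall>eta. design N eta \<longrightarrow>
            (diff_quot Phi xi eta \<longlongrightarrow> dirderiv Phi xi eta) (at_right 0) \<and>
            dirderiv Phi xi eta = (\<Sum>i<N. ereal (eta i) * dirderiv_pt Phi xi i)))"

definition smooth_on_segments :: "nat \<Rightarrow> ((nat \<Rightarrow> real) \<Rightarrow> ereal) \<Rightarrow> bool" where
  "smooth_on_segments N Phi \<longleftrightarrow>
     (\<forall>xi eta. design N xi \<longrightarrow> design N eta \<longrightarrow> Phi xi < \<infinity> \<longrightarrow> Phi eta < \<infinity> \<longrightarrow>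
        (\<forall>a\<in>{0..1}. Phi (mix a xi eta) < \<infinity>) \<and>
        (\<exists>g :: nat \<Rightarrow> real \<Rightarrow> real.
            (\<forall>a\<in>{0..1}. g 0 a = real_of_ereal (Phi (mix a xi eta))) \<and>
            (\<forall>k. \<forall>a\<in>{0..1}. (g k has_real_derivative g (Suc k) a) (at a within {0..1}))))"

definition crit_class_Lambda :: "nat \<Rightarrow> ((nat \<Rightarrow> real) \<Rightarrow> ereal) \<Rightarrow> bool" where
  "crit_class_Lambda N Phi \<longleftrightarrow>
     (\<forall>xi. design N xi \<longrightarrow> Phi xi \<noteq> -\<infinity>) \<and>
     convex_crit N Phi \<and> lin_differentiable N Phi \<and> smooth_on_segments N Phi"

end

(*
  Write f i = F(xi_eps; x_i).  Since F(xi_eps, .) is linear and F(xi_eps, xi_eps) = 0, convexity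
  gives the first-order bound  Phi(xi_eps) - Phi(xi_star) <= -F(xi_eps, xi_star)
  = sum_i (xi_eps i - xi_star i) * f i.  Conditions (a)-(c) provide a level s with f i >= s - eps/2
  on X1, f i <= s + eps/2 on X3 and |f i - s| <= eps/2 on X2, while passing from xi_eps to xi_star
  can only raise weights on X1 and lower them on X3.  Hence every term
  (xi_eps i - xi_star i) * (f i - s) is at most eps/2 * |xi_eps i - xi_star i|; the weight
  differences sum to 0 and their absolute values to at most 2, so the sum is at most eps.
*)

theory Submission
  imports Defs
begin

lemma mix_self: "mix a x x = x"
  unfolding mix_def by (simp add: algebra_simps)

lemma lin_differentiableD:
  assumes "lin_differentiable N Phi" "design N x" "Phi x < \<infinity>"
  shows "i < N \<Longrightarrow> \<bar>dirderiv_pt Phi x i\<bar> \<noteq> \<infinity>"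
    and "design N y \<Longrightarrow> (diff_quot Phi x y \<longlongrightarrow> dirderiv Phi x y) (at_right 0)"
    and "design N y \<Longrightarrow> dirderiv Phi x y = (\<Sum>i<N. ereal (y i) * dirderiv_pt Phi x i)"
proof -
  note L = assms(1)[unfolded lin_differentiable_def, rule_format, OF assms(2,3)]
  show "i < N \<Longrightarrow> \<bar>dirderiv_pt Phi x i\<bar> \<noteq> \<infinity>"
    by (rule conjunct2[OF conjunct1[OF L, rule_format]])
  show "design N y \<Longrightarrow> (diff_quot Phi x y \<longlongrightarrow> dirderiv Phi x y) (at_right 0)"
    by (rule conjunct1[OF conjunct2[OF L, rule_format]])
  show "design N y \<Longrightarrow> dirderiv Phi x y = (\<Sum>i<N. ereal (y i) * dirderiv_pt Phi x i)"
    by (rule conjunct2[OF conjunct2[OF L, rule_format]])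
qed

lemma dirderiv_eq_sum:
  assumes lin: "lin_differentiable N Phi" and x: "design N x" "Phi x < \<infinity>" and y: "design N y"
  shows "dirderiv Phi x y = ereal (\<Sum>i<N. y i * real_of_ereal (dirderiv_pt Phi x i))"
proof -
  have "dirderiv Phi x y = (\<Sum>i<N. ereal (y i) * dirderiv_pt Phi x i)"
    using lin_differentiableD(3)[OF lin x y] .
  also have "\<dots> = (\<Sum>i<N. ereal (y i * real_of_ereal (dirderiv_pt Phi x i)))"
    using lin_differentiableD(1)[OF lin x]
    by (intro sum.cong) (metis ereal_real' lessThan_iff times_ereal.simps(1))+
  finally show ?thesis
    by simp
qed

lemma dirderiv_self_eq_0:
  assumes "lin_differentiable N Phi" "design N x" and Px: "Phi x = ereal P"
  shows "dirderiv Phi x x = 0"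
proof -
  have "diff_quot Phi x x = (\<lambda>a. 0)"
    unfolding diff_quot_def by (simp add: mix_self Px)
  then have "((\<lambda>a. 0) \<longlongrightarrow> dirderiv Phi x x) (at_right (0::real))"
    using lin_differentiableD(2)[OF assms(1,2) _ assms(2)] Px by simp
  then show ?thesis
    using tendsto_unique[OF trivial_limit_at_right_real _ tendsto_const] by blast
qed

lemma dirderiv_le_diff:
  assumes cvx: "convex_crit N Phi" and lin: "lin_differentiable N Phi"
    and x: "design N x" and y: "design N y"
    and Px: "Phi x = ereal P" and Py: "Phi y = ereal Q"
  shows "dirderiv Phi x y \<le> ereal (Q - P)"
proof (rule tendsto_le[OF trivial_limit_at_right_real tendsto_const])
  show "(diff_quot Phi x y \<longlongrightarrow> dirderiv Phi x y) (at_right 0)"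
    using lin_differentiableD(2)[OF lin x _ y] Px by simp
  show "\<forall>\<^sub>F a in at_right 0. diff_quot Phi x y a \<le> ereal (Q - P)"
    unfolding eventually_at_right_field
  proof (intro exI[of _ 1] conjI allI impI)
    show "(0::real) < 1"
      by simp
    fix a :: real
    assume "0 < a" "a < 1"
    then have "Phi (mix a x y) \<le> ereal (1 - a) * Phi x + ereal a * Phi y"
      using cvx x y unfolding convex_crit_def by simp
    then have "Phi (mix a x y) \<le> ereal ((1 - a) * P + a * Q)"
      by (simp add: Px Py)
    then show "diff_quot Phi x y a \<le> ereal (Q - P)"
      using \<open>0 < a\<close> unfolding diff_quot_def Px
      by (cases "Phi (mix a x y)") (auto simp: divide_simps algebra_simps)
  qed
qed

lemma convex_crit_diff_le_sum:
  assumes cvx: "convex_crit N Phi" and lin: "lin_differentiable N Phi"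
    and x: "design N x" and y: "design N y"
    and Px: "Phi x = ereal P" and Py: "Phi y = ereal Q"
  shows "P - Q \<le> (\<Sum>i<N. (x i - y i) * real_of_ereal (dirderiv_pt Phi x i))"
proof -
  let ?f = "\<lambda>i. real_of_ereal (dirderiv_pt Phi x i)"
  have "(\<Sum>i<N. x i * ?f i) = 0"
    using dirderiv_self_eq_0[OF lin x Px] dirderiv_eq_sum[OF lin x _ x] Px
    by (simp add: zero_ereal_def)
  moreover have "(\<Sum>i<N. y i * ?f i) \<le> Q - P"
    using dirderiv_le_diff[OF cvx lin x y Px Py] dirderiv_eq_sum[OF lin x _ y] Px by simp
  ultimately show ?thesis
    by (simp add: left_diff_distrib sum_subtractf)
qed

lemma mult_sub_le_half_abs:
  fixes d f s e :: real
  assumes "(d \<le> 0 \<and> s - e/2 \<le> f) \<or> (0 \<le> d \<and> f \<le> s + e/2) \<or> \<bar>f - s\<bar> \<le> e/2"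
  shows "d * (f - s) \<le> e/2 * \<bar>d\<bar>"
proof -
  consider "d \<le> 0" "s - e/2 \<le> f" | "0 \<le> d" "f \<le> s + e/2" | "\<bar>f - s\<bar> \<le> e/2"
    using assms by blast
  then show ?thesis
  proof cases
    case 1
    then show ?thesis
      using mult_left_mono_neg[of "-(e/2)" "f - s" d] by (simp add: algebra_simps)
  next
    case 2
    then show ?thesis
      using mult_left_mono[of "f - s" "e/2" d] by (simp add: algebra_simps)
  next
    case 3
    have "d * (f - s) \<le> \<bar>d\<bar> * \<bar>f - s\<bar>"
      by (metis abs_ge_self abs_mult)
    also have "\<dots> \<le> \<bar>d\<bar> * (e/2)"
      using 3 by (intro mult_left_mono) auto
    finally show ?thesis
      by (simp add: mult.commute)
  qed
qed

lemma sum_mult_le_of_near_level: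
  fixes d f :: "'a \<Rightarrow> real"
  assumes "finite A" "sum d A = 0" "(\<Sum>i\<in>A. \<bar>d i\<bar>) \<le> 2" "0 \<le> e"
    and near: "\<And>i. i \<in> A \<Longrightarrow> d i * (f i - s) \<le> e/2 * \<bar>d i\<bar>"
  shows "(\<Sum>i\<in>A. d i * f i) \<le> e"
proof -
  have "(\<Sum>i\<in>A. d i * f i) = (\<Sum>i\<in>A. d i * (f i - s)) + s * sum d A"
    by (simp add: algebra_simps sum.distrib sum_distrib_left sum_subtractf)
  also have "\<dots> = (\<Sum>i\<in>A. d i * (f i - s))"
    using assms(2) by simp
  also have "\<dots> \<le> e/2 * (\<Sum>i\<in>A. \<bar>d i\<bar>)"
    unfolding sum_distrib_left by (rule sum_mono) (rule near)
  also have "\<dots> \<le> e"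
    using assms(3,4) by (simp add: mult_left_mono)
  finally show ?thesis .
qed

lemma sum_mass_shift_mult_le:
  fixes v w f :: "'a \<Rightarrow> real"
  assumes "finite A" "A \<subseteq> Up \<union> Mid \<union> Down" "0 \<le> e"
    and "sum v A = 1" "sum w A = 1" "\<And>i. i \<in> A \<Longrightarrow> 0 \<le> v i" "\<And>i. i \<in> A \<Longrightarrow> 0 \<le> w i"
    and "\<And>i. i \<in> Up \<Longrightarrow> w i \<le> v i" "\<And>i. i \<in> Down \<Longrightarrow> v i \<le> w i"
    and "\<And>i. i \<in> Up \<Longrightarrow> s - e/2 \<le> f i" "\<And>i. i \<in> Down \<Longrightarrow> f i \<le> s + e/2"
    and "\<And>i. i \<in> Mid \<Longrightarrow> \<bar>f i - s\<bar> \<le> e/2"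
  shows "(\<Sum>i\<in>A. (w i - v i) * f i) \<le> e"
proof (rule sum_mult_le_of_near_level[where s = s])
  show "(\<Sum>i\<in>A. w i - v i) = 0"
    using assms(4,5) by (simp add: sum_subtractf)
  have "\<bar>w i - v i\<bar> \<le> w i + v i" if "i \<in> A" for i
    using assms(6,7)[OF that] by linarith
  then have "(\<Sum>i\<in>A. \<bar>w i - v i\<bar>) \<le> (\<Sum>i\<in>A. w i + v i)"
    by (rule sum_mono)
  also have "\<dots> = 2"
    using assms(4,5) by (simp add: sum.distrib)
  finally show "(\<Sum>i\<in>A. \<bar>w i - v i\<bar>) \<le> 2" .
  show "(w i - v i) * (f i - s) \<le> e/2 * \<bar>w i - v i\<bar>" if i: "i \<in> A" for i
  proof (rule mult_sub_le_half_abs)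
    consider "i \<in> Up" | "i \<in> Mid" | "i \<in> Down"
      using i assms(2) by blast
    then show "(w i - v i \<le> 0 \<and> s - e/2 \<le> f i) \<or> (0 \<le> w i - v i \<and> f i \<le> s + e/2)
        \<or> \<bar>f i - s\<bar> \<le> e/2"
      by cases (use assms(8-12) in force)+
  qed
qed (fact assms(1,3))+

lemma level_between_SUP_INF:
  fixes f :: "'a \<Rightarrow> real"
  assumes "finite A" "finite B"
    and "(SUP i\<in>A. ereal (f i)) \<le> (INF i\<in>B. ereal (f i)) + ereal e"
  obtains s where "\<And>i. i \<in> A \<Longrightarrow> f i \<le> s + e/2" "\<And>i. i \<in> B \<Longrightarrow> s - e/2 \<le> f i"
proof (cases "A = {}")
  case True
  show ?thesis
    by (rule that[of "Min (f ` B) + e/2"]) (simp_all add: True assms(2))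
next
  case False
  have gap: "f j \<le> f i + e" if "j \<in> A" "i \<in> B" for i j
  proof -
    have "ereal (f j) \<le> (SUP i\<in>A. ereal (f i))"
      using that by (intro SUP_upper)
    also have "\<dots> \<le> (INF i\<in>B. ereal (f i)) + ereal e"
      by (fact assms(3))
    also have "\<dots> \<le> ereal (f i) + ereal e"
      using that by (intro add_right_mono INF_lower)
    finally show ?thesis
      by simp
  qed
  show ?thesis
  proof (rule that[of "Max (f ` A) - e/2"])
    show "f i \<le> Max (f ` A) - e/2 + e/2" if "i \<in> A" for i
      using assms(1) that by simp
    show "Max (f ` A) - e/2 - e/2 \<le> f i" if "i \<in> B" for i
    proof -
      have "Max (f ` A) \<le> f i + e"
        using assms(1) False gap[OF _ that] by simp
      then show ?thesis
        by simp
    qed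
  qed
qed

lemma near_level_of_SUP_INF:
  fixes F :: "'a \<Rightarrow> ereal" and f :: "'a \<Rightarrow> real"
  assumes "finite Up" "finite Down"
    and F: "\<And>i. i \<in> Up \<union> Mid \<union> Down \<Longrightarrow> F i = ereal (f i)"
    and Mid_empty: "Mid = {} \<Longrightarrow> (SUP i\<in>Down. F i) \<le> (INF i\<in>Up. F i) + ereal e"
    and Mid_nonempty: "Mid \<noteq> {} \<Longrightarrow> \<exists>s. \<forall>i\<in>Mid.
        (ereal (s - e/2) < F i \<and> F i < ereal (s + e/2)) \<and>
        ((SUP j\<in>Down. F j) \<le> ereal (s + e/2) \<and> ereal (s - e/2) \<le> (INF j\<in>Up. F j))"
  obtains s where "\<And>i. i \<in> Up \<Longrightarrow> s - e/2 \<le> f i" "\<And>i. i \<in> Down \<Longrightarrow> f i \<le> s + e/2"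
    and "\<And>i. i \<in> Mid \<Longrightarrow> \<bar>f i - s\<bar> \<le> e/2"
proof (cases "Mid = {}")
  case True
  have "(SUP i\<in>Down. ereal (f i)) \<le> (INF i\<in>Up. ereal (f i)) + ereal e"
    using Mid_empty[OF True] F by (simp cong: SUP_cong_simp INF_cong_simp)
  then obtain s where "\<And>i. i \<in> Down \<Longrightarrow> f i \<le> s + e/2" "\<And>i. i \<in> Up \<Longrightarrow> s - e/2 \<le> f i"
    using level_between_SUP_INF[OF assms(2,1)] by blast
  with True show ?thesis
    by (intro that[of s]) auto
next
  case False
  then obtain s i0 where "i0 \<in> Mid" and s: "\<forall>i\<in>Mid.
        (ereal (s - e/2) < F i \<and> F i < ereal (s + e/2)) \<and>
        ((SUP j\<in>Down. F j) \<le> ereal (s + e/2) \<and> ereal (s - e/2) \<le> (INF j\<in>Up. F j))"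
    using Mid_nonempty by blast
  show ?thesis
  proof (rule that[of s])
    show "s - e/2 \<le> f i" if "i \<in> Up" for i
    proof -
      have "ereal (s - e/2) \<le> (INF j\<in>Up. F j)"
        using s \<open>i0 \<in> Mid\<close> by blast
      also have "\<dots> \<le> ereal (f i)"
        using F[of i] that by (auto intro: INF_lower2)
      finally show ?thesis
        by simp
    qed
    show "f i \<le> s + e/2" if "i \<in> Down" for i
    proof -
      have "ereal (f i) \<le> (SUP j\<in>Down. F j)"
        using F[of i] that by (auto intro: SUP_upper2)
      also have "\<dots> \<le> ereal (s + e/2)"
        using s \<open>i0 \<in> Mid\<close> by blast
      finally show ?thesis
        by simp
    qed
    show "\<bar>f i - s\<bar> \<le> e/2" if "i \<in> Mid" for i
    proof -
      have "s - e/2 < f i" "f i < s + e/2"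
        using s F[of i] that by auto
      then show ?thesis
        unfolding abs_le_iff by linarith
    qed
  qed
qed

theorem theorem4:
  fixes N n :: nat
    and I :: "nat \<Rightarrow> real^'p^'p"
    and phi :: "real^'p^'p \<Rightarrow> ereal"
    and Phi :: "(nat \<Rightarrow> real) \<Rightarrow> ereal"
    and xi_star xi_eps :: "nat \<Rightarrow> real"
    and X1 X2 X3 :: "nat set"
    and \<epsilon> :: real
  assumes n_pos: "0 < n" and nN: "n \<le> N"
    and I_psd: "\<forall>i<N. psd_sym (I i)"
    and Phi_crit: "\<forall>w. design N w \<longrightarrow> Phi w = phi (info_matrix N I w)"
    and Lambda: "crit_class_Lambda N Phi"
    and opt_in: "bounded_design N n xi_star"
    and opt_min: "\<forall>xi. bounded_design N n xi \<longrightarrow> Phi xi_star \<le> Phi xi"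
    and eps_pos: "0 < \<epsilon>"
    and eps_in: "bounded_design N n xi_eps"
    and eps_fin: "Phi xi_eps < \<infinity>"
    and part_cover: "X1 \<union> X2 \<union> X3 = {..<N}"
    and part_disj: "X1 \<inter> X2 = {}" "X1 \<inter> X3 = {}" "X2 \<inter> X3 = {}"
    and cond_a: "(\<forall>i\<in>X1. xi_eps i = 0) \<and> (\<forall>i\<in>X3. xi_eps i = 1 / real n)"
    and cond_b: "X2 = {} \<Longrightarrow>
       (SUP i\<in>X3. dirderiv_pt Phi xi_eps i) \<le> (INF i\<in>X1. dirderiv_pt Phi xi_eps i) + ereal \<epsilon>"
    and cond_c: "X2 \<noteq> {} \<Longrightarrow> \<exists>s::real. \<forall>i\<in>X2.
         (0 < xi_eps i \<and> xi_eps i < 1 / real n) \<and>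
         (ereal (s - \<epsilon>/2) < dirderiv_pt Phi xi_eps i \<and> dirderiv_pt Phi xi_eps i < ereal (s + \<epsilon>/2)) \<and>
         ((SUP j\<in>X3. dirderiv_pt Phi xi_eps j) \<le> ereal (s + \<epsilon>/2) \<and>
          ereal (s - \<epsilon>/2) \<le> (INF j\<in>X1. dirderiv_pt Phi xi_eps j))"
  shows "Phi xi_eps - Phi xi_star \<le> ereal \<epsilon>"
proof -
  have dE: "design N xi_eps" and dS: "design N xi_star" and bS: "\<forall>i<N. xi_star i \<le> 1 / real n"
    using eps_in opt_in unfolding bounded_design_def by auto
  have cvx: "convex_crit N Phi" and lin: "lin_differentiable N Phi"
    and not_MInf: "\<forall>xi. design N xi \<longrightarrow> Phi xi \<noteq> -\<infinity>"
    using Lambda unfolding crit_class_Lambda_def by auto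
  obtain P where P: "Phi xi_eps = ereal P"
    using eps_fin not_MInf dE by (cases "Phi xi_eps") auto
  obtain Q where Q: "Phi xi_star = ereal Q"
    using opt_min eps_in P not_MInf dS by (cases "Phi xi_star") force+
  define f where "f i = real_of_ereal (dirderiv_pt Phi xi_eps i)" for i
  have F: "dirderiv_pt Phi xi_eps i = ereal (f i)" if "i \<in> X1 \<union> X2 \<union> X3" for i
    using lin_differentiableD(1)[OF lin dE eps_fin] that part_cover unfolding f_def
    by (auto simp: ereal_real')
  have sub: "X1 \<subseteq> {..<N}" "X3 \<subseteq> {..<N}"
    using part_cover by auto
  then have fin: "finite X1" "finite X3"
    by (auto intro: finite_subset)
  obtain s where level: "\<And>i. i \<in> X1 \<Longrightarrow> s - \<epsilon>/2 \<le> f i" "\<And>i. i \<in> X3 \<Longrightarrow> f i \<le> s + \<epsilon>/2"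
    "\<And>i. i \<in> X2 \<Longrightarrow> \<bar>f i - s\<bar> \<le> \<epsilon>/2"
    by (rule near_level_of_SUP_INF[OF fin F cond_b]) (use cond_c in blast)+
  have "(\<Sum>i<N. (xi_eps i - xi_star i) * f i) \<le> \<epsilon>"
  proof (rule sum_mass_shift_mult_le[where Up = X1 and Mid = X2 and Down = X3 and s = s])
    show "xi_eps i \<le> xi_star i" if "i \<in> X1" for i
      using cond_a dS sub that unfolding design_def by auto
    show "xi_star i \<le> xi_eps i" if "i \<in> X3" for i
      using cond_a bS sub that by auto
    show "\<bar>f i - s\<bar> \<le> \<epsilon>/2" if "i \<in> X2" for i
      using level(3) that .
  qed (use dE dS part_cover eps_pos level(1,2) in \<open>auto simp: design_def\<close>)
  moreover have "P - Q \<le> (\<Sum>i<N. (xi_eps i - xi_star i) * f i)"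
    using convex_crit_diff_le_sum[OF cvx lin dE dS P Q] unfolding f_def .
  ultimately show ?thesis
    using P Q by simp
qed

end
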